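(* The classes PosLimSup, PosLimInf and PosLimAvg are each closed under $\max$, and the classes AsLimSup, AsLimInf and AsLimAvg are each closed under $\min$.
   Context: A probabilistic weighted automaton over a finite alphabet $\Sigma$ is a tuple $A=(Q,\rho_I,\Sigma,\delta,\gamma)$ where $Q$ is a finite set of states, $\rho_I$ is a probability distribution on $Q$, $\delta:Q\times\Sigma\to\mathcal D(Q)$ assigns to each state and letter a probability distribution on $Q$, and $\gamma:Q\times\Sigma\times Q\to\mathbb Q$ is a weight function. A run over an infinite word $w=\sigma_1\sigma_2\dots$ is a sequence $r=q_0\sigma_1q_1\sigma_2\dots$ with $\rho_I(q_0)>0$ and $\delta(q_i,\sigma_{i+1})(q_{i+1})>0$ for all $i$; its weight sequence is $\gamma(r)=v_0v_1\dots$ with $v_i=\gamma(q_i,\sigma_{i+1},q_{i+1})$. For each $w$, the probabilities of finite run prefixes induce a probability measure $\mathbb P^A$ on runs over $w$. For a value function $\mathrm{Val}$, positive semantics: $L^{>0}_A(w)=\sup\{\eta\mid \mathbb P^A(\{r:\mathrm{Val}(\gamma(r))\ge\eta\})>0\}$; almost-sure semantics: $L^{=1}_A(w)=\sup\{\eta\mid \mathbb P^A(\{r:\mathrm{Val}(\gamma(r))\ge\eta\})=1\}$. Value functions: $\mathsf{LimSup}(v)=\limsup_n v_n$, $\mathsf{LimInf}(v)=\liminf_n v_n$, $\mathsf{LimAvg}(v)=\liminf_n\frac1n\sum_{i<n}v_i$. PosX (resp. AsX) denotes the class of automata with value function $\mathsf X$ under positive (resp. almost-sure) semantics. A class $\mathcal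 C$ is closed under $\max$ (resp. $\min$) if for any $A_1,A_2\in\mathcal C$ over the same alphabet there is $A\in\mathcal C$ with $L_A(w)=\max\{L_{A_1}(w),L_{A_2}(w)\}$ (resp. $\min$) for all words $w$. *)

theory Defs
  imports "HOL-Probability.Probability"
begin

record 'a pwa =
  states :: "nat set"
  init   :: "nat pmf"
  trans  :: "nat \<Rightarrow> 'a \<Rightarrow> nat pmf"
  wt     :: "nat \<Rightarrow> 'a \<Rightarrow> nat \<Rightarrow> rat"

definition wf_pwa :: "'a pwa \<Rightarrow> bool" where
  "wf_pwa A \<longleftrightarrow> finite (states A) \<and> set_pmf (init A) \<subseteq> states A \<and>
     (\<forall>q\<in>states A. \<forall>\<sigma>. set_pmf (trans A q \<sigma>) \<subseteq> states A)"

(* Infinite words w = sigma_1 sigma_2 ... are functions nat => 'a with w i = sigma_(i+1).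
   Probability of the finite run prefix q_0 sigma_1 q_1 ... sigma_n q_n. *)
definition prefix_prob :: "'a pwa \<Rightarrow> (nat \<Rightarrow> 'a) \<Rightarrow> nat list \<Rightarrow> real" where
  "prefix_prob A w xs =
     pmf (init A) (hd xs) * (\<Prod>i<length xs - 1. pmf (trans A (xs ! i) (w i)) (xs ! Suc i))"

definition run_measure :: "'a pwa \<Rightarrow> (nat \<Rightarrow> 'a) \<Rightarrow> nat stream measure" where
  "run_measure A w = (THE M. sets M = sets (stream_space (count_space UNIV)) \<and> prob_space M \<and>
     (\<forall>xs. xs \<noteq> [] \<longrightarrow> emeasure M {r. stake (length xs) r = xs} = ennreal (prefix_prob A w xs)))"

definition weight_seq :: "'a pwa \<Rightarrow> (nat \<Rightarrow> 'a) \<Rightarrow> nat stream \<Rightarrow> nat \<Rightarrow> real" where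
  "weight_seq A w r i = real_of_rat (wt A (r !! i) (w i) (r !! Suc i))"

datatype valfun = LimSup | LimInf | LimAvg

fun Val :: "valfun \<Rightarrow> (nat \<Rightarrow> real) \<Rightarrow> ereal" where
  "Val LimSup v = limsup (\<lambda>n. ereal (v n))"
| "Val LimInf v = liminf (\<lambda>n. ereal (v n))"
| "Val LimAvg v = liminf (\<lambda>n. ereal ((\<Sum>i<n. v i) / real n))"

datatype semantics = Pos | As

fun lang :: "semantics \<Rightarrow> valfun \<Rightarrow> 'a pwa \<Rightarrow> (nat \<Rightarrow> 'a) \<Rightarrow> ereal" where
  "lang Pos V A w = Sup {ereal \<eta> | \<eta>.
      measure (run_measure A w) {r. Val V (weight_seq A w r) \<ge> ereal \<eta>} > 0}"
| "lang As V A w = Sup {ereal \<eta> | \<eta>.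
      measure (run_measure A w) {r. Val V (weight_seq A w r) \<ge> ereal \<eta>} = 1}"

definition closed_max :: "semantics \<Rightarrow> valfun \<Rightarrow> 'a itself \<Rightarrow> bool" where
  "closed_max s V (_ :: 'a itself) \<longleftrightarrow> (\<forall>A1 A2 :: 'a pwa. wf_pwa A1 \<longrightarrow> wf_pwa A2 \<longrightarrow>
     (\<exists>A :: 'a pwa. wf_pwa A \<and> (\<forall>w. lang s V A w = max (lang s V A1 w) (lang s V A2 w))))"

definition closed_min :: "semantics \<Rightarrow> valfun \<Rightarrow> 'a itself \<Rightarrow> bool" where
  "closed_min s V (_ :: 'a itself) \<longleftrightarrow> (\<forall>A1 A2 :: 'a pwa. wf_pwa A1 \<longrightarrow> wf_pwa A2 \<longrightarrow>
     (\<exists>A :: 'a pwa. wf_pwa A \<and> (\<forall>w. lang s V A w = min (lang s V A1 w) (lang s V A2 w))))"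

end

theory Submission
  imports Defs
begin

text \<open>
  Flip a fair coin and then run \<open>A\<^sub>1\<close> or \<open>A\<^sub>2\<close> on disjoint copies of their state spaces.
  For every threshold \<open>\<eta>\<close>, the probability that a run of this union automaton has value
  at least \<open>\<eta>\<close> is the average of the corresponding probabilities for \<open>A\<^sub>1\<close> and \<open>A\<^sub>2\<close>.
  An average of two probabilities is positive iff one of them is, and equals 1 iff both do;
  taking the supremum over \<open>\<eta>\<close> gives the maximum under the positive semantics and, since
  the thresholds reached almost surely form a down-closed set, the minimum under the
  almost-sure semantics. The value function plays no role.

  The run measure is only specified through its cylinder probabilities. It is unique by
  Dynkin's \<open>\<pi>\<close>-\<open>\<lambda>\<close> theorem, and it exists because it is the image of an i.i.d. stream of
  random transition tables, one drawn afresh for every step of the run.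
\<close>

lemma (in prob_space) emeasure_stream_space_snth_prod:
  assumes "\<And>i. i < n \<Longrightarrow> B i \<in> sets M"
  shows "emeasure (stream_space M) {s \<in> space (stream_space M). \<forall>i<n. s !! i \<in> B i} =
    (\<Prod>i<n. emeasure M (B i))"
  using assms
proof (induction n arbitrary: B)
  case 0
  interpret S: prob_space "stream_space M" by (rule prob_space_stream_space)
  show ?case by (simp add: S.emeasure_space_1)
next
  case (Suc n)
  have [measurable]: "B i \<in> sets M" if "i < Suc n" for i using Suc.prems that .
  have "{s \<in> space (stream_space M). \<forall>i\<in>{..<Suc n}. s !! i \<in> B i} \<in> sets (stream_space M)"
    by (intro sets.sets_Collect_finite_All) measurable
  moreover have "{s \<in> space (stream_space M). t ## s \<in> {s \<in> space (stream_space M). \<forall>i<Suc n. s !! i \<in> B i}}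
      = (if t \<in> B 0 then {s \<in> space (stream_space M). \<forall>i<n. s !! i \<in> B (Suc i)} else {})"
    if "t \<in> space M" for t
    using that by (auto simp: All_less_Suc2 space_stream_space)
  ultimately have "emeasure (stream_space M) {s \<in> space (stream_space M). \<forall>i<Suc n. s !! i \<in> B i}
    = (\<integral>\<^sup>+t. indicator (B 0) t *
         emeasure (stream_space M) {s \<in> space (stream_space M). \<forall>i<n. s !! i \<in> B (Suc i)} \<partial>M)"
    by (subst emeasure_stream_space) (auto intro!: nn_integral_cong split: split_indicator)
  also have "\<dots> = emeasure M (B 0) * (\<Prod>i<n. emeasure M (B (Suc i)))"
    using Suc by (simp add: nn_integral_multc)
  also have "\<dots> = (\<Prod>i<Suc n. emeasure M (B i))"
    by (rule prod.lessThan_Suc_shift[symmetric])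
  finally show ?case .
qed

lemma prod_eq_while_alive:
  fixes f g :: "nat \<Rightarrow> 'b::comm_semiring_1"
  assumes "\<not> alive 0 \<Longrightarrow> c = 0"
    and "\<And>i. alive i \<Longrightarrow> f i = g i"
    and "\<And>i. alive i \<Longrightarrow> \<not> alive (Suc i) \<Longrightarrow> g i = 0"
  shows "c * (\<Prod>i<n. f i) = c * (\<Prod>i<n. g i)"
proof -
  have "c * (\<Prod>i<n. f i) = c * (\<Prod>i<n. g i) \<and> (\<not> alive n \<longrightarrow> c * (\<Prod>i<n. g i) = 0)"
  proof (induction n)
    case 0
    then show ?case using assms(1) by simp
  next
    case (Suc n)
    show ?case
    proof (cases "alive n")
      case True
      then show ?thesis using Suc assms(2,3)[of n] by (simp add: mult.assoc[symmetric])
    next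
      case False
      then show ?thesis using Suc by (simp add: mult.assoc[symmetric])
    qed
  qed
  then show ?thesis ..
qed

lemma stake_eq_iff_sstart: "stake (length xs) r = xs \<longleftrightarrow> r \<in> sstart UNIV xs"
  by (auto simp: sstart_eq list_eq_iff_nth_eq)

lemma run_measure_eqI:
  assumes "sets M = sets (stream_space (count_space UNIV))" "prob_space M"
    and "\<And>xs. xs \<noteq> [] \<Longrightarrow> emeasure M (sstart UNIV xs) = prefix_prob A w xs"
  shows "run_measure A w = M"
  unfolding run_measure_def stake_eq_iff_sstart Collect_mem_eq
proof (rule the_equality)
  fix N assume N: "sets N = sets (stream_space (count_space UNIV)) \<and> prob_space N \<and>
    (\<forall>xs. xs \<noteq> [] \<longrightarrow> emeasure N (sstart UNIV xs) = ennreal (prefix_prob A w xs))"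
  show "N = M"
    by (rule stream_space_eq_sstart[where S = UNIV]) (use N assms in auto)
qed (use assms in auto)

text \<open>
  A transition table picks, independently for each letter and state, a successor state.
\<close>

definition transition_table_pmf :: "'a::finite pwa \<Rightarrow> ('a \<times> nat \<Rightarrow> nat) pmf" where
  "transition_table_pmf A = Pi_pmf (UNIV \<times> states A) 0 (\<lambda>(a, q). trans A q a)"

definition run_seed_pmf :: "'a::finite pwa \<Rightarrow> (nat \<times> ('a \<times> nat \<Rightarrow> nat)) pmf" where
  "run_seed_pmf A = pair_pmf (init A) (transition_table_pmf A)"

primrec seeded_run :: "(nat \<Rightarrow> 'a) \<Rightarrow> (nat \<times> ('a \<times> nat \<Rightarrow> nat)) stream \<Rightarrow> nat \<Rightarrow> nat" where
  "seeded_run w s 0 = fst (s !! 0)"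
| "seeded_run w s (Suc n) = snd (s !! Suc n) (w n, seeded_run w s n)"

definition seeded_run_measure :: "'a::finite pwa \<Rightarrow> (nat \<Rightarrow> 'a) \<Rightarrow> nat stream measure" where
  "seeded_run_measure A w = distr (stream_space (measure_pmf (run_seed_pmf A)))
     (stream_space (count_space UNIV)) (\<lambda>s. to_stream (seeded_run w s))"

lemma measurable_seeded_run:
  "(\<lambda>s. seeded_run w s n) \<in> stream_space (measure_pmf P) \<rightarrow>\<^sub>M count_space UNIV"
proof (induction n)
  case 0
  show ?case by (simp add: measurable_compose[OF measurable_shd])
next
  case (Suc n)
  have "(\<lambda>s. snd (s !! Suc n) (w n, q)) \<in> stream_space (measure_pmf P) \<rightarrow>\<^sub>M count_space UNIV" for q
    using measurable_compose[OF measurable_snth[of "Suc n" "measure_pmf P"], of "\<lambda>p. snd p (w n, q)"]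
    by simp
  from measurable_compose_countable'[where f = "\<lambda>q s. snd (s !! Suc n) (w n, q)", OF this Suc]
  show ?case by simp
qed

lemma measurable_to_stream_seeded_run:
  "(\<lambda>s. to_stream (seeded_run w s)) \<in> stream_space (measure_pmf P) \<rightarrow>\<^sub>M stream_space (count_space UNIV)"
  by (rule measurable_stream_space2) (simp add: to_stream_def measurable_seeded_run)

definition seed_event :: "(nat \<Rightarrow> 'a) \<Rightarrow> nat list \<Rightarrow> nat \<Rightarrow> (nat \<times> ('a \<times> nat \<Rightarrow> nat)) set" where
  "seed_event w xs i = (case i of 0 \<Rightarrow> {p. fst p = xs ! 0} | Suc j \<Rightarrow> {p. snd p (w j, xs ! j) = xs ! i})"

lemma seeded_run_prefix_iff:
  "(\<forall>i<n. seeded_run w s i = xs ! i) \<longleftrightarrow> (\<forall>i<n. s !! i \<in> seed_event w xs i)"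
proof (induction n)
  case (Suc n)
  then show ?case
    by (cases n) (auto simp: All_less_Suc seed_event_def)
qed simp

lemma emeasure_seed_event:
  "emeasure (measure_pmf (run_seed_pmf A)) (seed_event w xs i) =
    ennreal (case i of 0 \<Rightarrow> pmf (init A) (xs ! 0)
     | Suc j \<Rightarrow> pmf (map_pmf (\<lambda>g. g (w j, xs ! j)) (transition_table_pmf A)) (xs ! i))"
proof (cases i)
  case 0
  then have "seed_event w xs i = fst -` {xs ! 0}"
    by (auto simp: seed_event_def)
  then have "emeasure (measure_pmf (run_seed_pmf A)) (seed_event w xs i) =
      emeasure (map_pmf fst (run_seed_pmf A)) {xs ! 0}"
    by simp
  then show ?thesis
    using 0 by (simp add: run_seed_pmf_def map_fst_pair_pmf emeasure_pmf_single)
next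
  case (Suc j)
  then have "seed_event w xs i = (\<lambda>p. snd p (w j, xs ! j)) -` {xs ! i}"
    by (auto simp: seed_event_def)
  then have "emeasure (measure_pmf (run_seed_pmf A)) (seed_event w xs i) =
      emeasure (map_pmf (\<lambda>g. g (w j, xs ! j)) (map_pmf snd (run_seed_pmf A))) {xs ! i}"
    by (simp add: map_pmf_comp vimage_def)
  then show ?thesis
    using Suc by (simp add: run_seed_pmf_def map_snd_pair_pmf emeasure_pmf_single)
qed

lemma pmf_transition_table_pmf:
  assumes "wf_pwa A" "q \<in> states A"
  shows "pmf (map_pmf (\<lambda>g. g (a, q)) (transition_table_pmf A)) x = pmf (trans A q a) x"
  using assms by (simp add: transition_table_pmf_def Pi_pmf_component wf_pwa_def)

lemma emeasure_seeded_run_measure_sstart: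
  assumes wf: "wf_pwa A" and "xs \<noteq> []"
  shows "emeasure (seeded_run_measure A w) (sstart UNIV xs) = prefix_prob A w xs"
proof -
  let ?P = "measure_pmf (run_seed_pmf A)"
  obtain n where len: "length xs = Suc n"
    using \<open>xs \<noteq> []\<close> by (cases xs) auto
  have "(\<lambda>s. to_stream (seeded_run w s)) -` sstart UNIV xs \<inter> space (stream_space ?P) =
      {s \<in> space (stream_space ?P). \<forall>i<length xs. seeded_run w s i = xs ! i}"
    by (auto simp: space_stream_space sstart_eq to_stream_def)
  then have "emeasure (seeded_run_measure A w) (sstart UNIV xs) =
      emeasure (stream_space ?P) {s \<in> space (stream_space ?P). \<forall>i<Suc n. s !! i \<in> seed_event w xs i}"
    by (simp only: seeded_run_measure_def emeasure_distr[OF measurable_to_stream_seeded_run sets_sstart]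
        len seeded_run_prefix_iff)
  also have "\<dots> = (\<Prod>i<Suc n. emeasure ?P (seed_event w xs i))"
    by (rule prob_space.emeasure_stream_space_snth_prod[OF prob_space_measure_pmf]) simp
  also have "\<dots> = ennreal (pmf (init A) (xs ! 0) *
      (\<Prod>i<n. pmf (map_pmf (\<lambda>g. g (w i, xs ! i)) (transition_table_pmf A)) (xs ! Suc i)))"
    by (simp only: prod.lessThan_Suc_shift emeasure_seed_event nat.case)
       (simp add: prod_ennreal ennreal_mult prod_nonneg)
  also have "\<dots> = ennreal (pmf (init A) (xs ! 0) * (\<Prod>i<n. pmf (trans A (xs ! i) (w i)) (xs ! Suc i)))"
    \<comment> \<open>off \<open>states A\<close> the table is degenerate, but there both products already vanish\<close>
  proof (intro arg_cong[where f = ennreal] prod_eq_while_alive[where alive = "\<lambda>i. xs ! i \<in> states A"])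
    show "pmf (init A) (xs ! 0) = 0" if "xs ! 0 \<notin> states A"
      using wf that by (auto simp: wf_pwa_def pmf_eq_0_set_pmf)
    show "pmf (trans A (xs ! i) (w i)) (xs ! Suc i) = 0" if "xs ! i \<in> states A" "xs ! Suc i \<notin> states A" for i
      using wf that by (auto simp: wf_pwa_def pmf_eq_0_set_pmf)
  qed (simp add: pmf_transition_table_pmf wf)
  also have "\<dots> = prefix_prob A w xs"
    using \<open>xs \<noteq> []\<close> by (simp add: prefix_prob_def hd_conv_nth len)
  finally show ?thesis .
qed

lemma run_measure_eq_seeded_run_measure:
  assumes "wf_pwa A"
  shows "run_measure A w = seeded_run_measure A w"
proof (rule run_measure_eqI)
  show "sets (seeded_run_measure A w) = sets (stream_space (count_space UNIV))"
    by (simp add: seeded_run_measure_def)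
  show "prob_space (seeded_run_measure A w)"
    unfolding seeded_run_measure_def
    by (intro prob_space.prob_space_distr prob_space.prob_space_stream_space prob_space_measure_pmf
        measurable_to_stream_seeded_run)
qed (use assms in \<open>rule emeasure_seeded_run_measure_sstart\<close>)

lemma
  fixes A :: "'a::finite pwa"
  assumes "wf_pwa A"
  shows prob_space_run_measure: "prob_space (run_measure A w)"
    and sets_run_measure: "sets (run_measure A w) = sets (stream_space (count_space UNIV))"
  using assms
  by (simp_all add: run_measure_eq_seeded_run_measure seeded_run_measure_def
      prob_space.prob_space_distr prob_space.prob_space_stream_space prob_space_measure_pmf
      measurable_to_stream_seeded_run)

lemma measure_run_measure_sstart:
  fixes A :: "'a::finite pwa"
  assumes "wf_pwa A" "xs \<noteq> []"
  shows "measure (run_measure A w) (sstart UNIV xs) = prefix_prob A w xs"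
proof -
  have "0 \<le> prefix_prob A w xs"
    by (simp add: prefix_prob_def prod_nonneg)
  then show ?thesis
    using assms by (simp add: measure_def run_measure_eq_seeded_run_measure emeasure_seeded_run_measure_sstart)
qed

lemma
  fixes A :: "'a::finite pwa"
  assumes "wf_pwa A"
  shows space_run_measure: "space (run_measure A w) = UNIV"
    and measurable_smap_run_measure: "smap f \<in> run_measure A w \<rightarrow>\<^sub>M stream_space (count_space UNIV)"
  using sets_eq_imp_space_eq[OF sets_run_measure[OF assms]]
  by (simp_all add: space_stream_space measurable_cong_sets[OF sets_run_measure[OF assms] refl])

lemma prefix_prob_singleton: "prefix_prob A w [x] = pmf (init A) x"
  by (simp add: prefix_prob_def)

lemma prefix_prob_snoc:
  assumes "xs \<noteq> []"
  shows "prefix_prob A w (xs @ [x]) = prefix_prob A w xs * pmf (trans A (last xs) (w (length xs - 1))) x"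
proof -
  obtain n where n: "length xs = Suc n"
    using assms by (cases xs) auto
  have "(\<Prod>i<n. pmf (trans A ((xs @ [x]) ! i) (w i)) ((xs @ [x]) ! Suc i)) =
      (\<Prod>i<n. pmf (trans A (xs ! i) (w i)) (xs ! Suc i))"
    by (intro prod.cong) (auto simp: nth_append n)
  moreover have "(xs @ [x]) ! n = last xs"
    using assms by (simp add: nth_append n last_conv_nth)
  ultimately show ?thesis
    using assms by (simp add: prefix_prob_def n nth_append mult.assoc)
qed

definition state_inl :: "nat \<Rightarrow> nat" where
  "state_inl q = 2 * q"

definition state_inr :: "nat \<Rightarrow> nat" where
  "state_inr q = Suc (2 * q)"

lemma state_inl_simps [simp]: "even (state_inl q)" "state_inl q div 2 = q"
  and state_inr_simps [simp]: "odd (state_inr q)" "state_inr q div 2 = q"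
  by (simp_all add: state_inl_def state_inr_def)

lemma range_state_inl: "range state_inl = {x. even x}"
  by (auto simp: state_inl_def elim!: evenE)

lemma range_state_inr: "range state_inr = {x. odd x}"
  by (auto simp: state_inr_def elim!: oddE)

lemma pmf_map_pmf_left_inverse:
  assumes "\<And>x. g (f x) = x"
  shows "pmf (map_pmf f p) y = (if y \<in> range f then pmf p (g y) else 0)"
proof (cases "y \<in> range f")
  case True
  then obtain x where "y = f x" by blast
  moreover have "inj f"
    by (rule inj_on_inverseI[where g = g]) (rule assms)
  ultimately show ?thesis
    using assms by (simp add: pmf_map_inj')
next
  case False
  then show ?thesis
    by (auto intro: pmf_map_outside)
qed

lemma vimage_smap_sstart_left_inverse:
  assumes "\<And>x. g (f x) = x"
  shows "smap f -` sstart UNIV xs = (if set xs \<subseteq> range f then sstart UNIV (map g xs) else {})"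
proof (cases "set xs \<subseteq> range f")
  case True
  then have "f a = xs ! i \<longleftrightarrow> a = g (xs ! i)" if "i < length xs" for a i
    using that assms nth_mem by (metis image_iff subsetD)
  then show ?thesis
    using True by (auto simp: sstart_eq)
next
  case False
  then obtain x where "x \<in> set xs" "x \<notin> range f"
    by blast
  then obtain i where "i < length xs" "xs ! i \<notin> range f"
    by (auto simp: in_set_conv_nth)
  then show ?thesis
    using False by (auto simp: sstart_eq) (metis rangeI)
qed

lemma pmf_map_state_inl: "pmf (map_pmf state_inl p) x = (if even x then pmf p (x div 2) else 0)"
  using pmf_map_pmf_left_inverse[of "\<lambda>x. x div 2" state_inl] by (simp add: range_state_inl)

lemma pmf_map_state_inr: "pmf (map_pmf state_inr p) x = (if odd x then pmf p (x div 2) else 0)"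
  using pmf_map_pmf_left_inverse[of "\<lambda>x. x div 2" state_inr] by (simp add: range_state_inr)

definition pwa_union :: "'a pwa \<Rightarrow> 'a pwa \<Rightarrow> 'a pwa" where
  "pwa_union A1 A2 =
    \<lparr>states = state_inl ` states A1 \<union> state_inr ` states A2,
     init = bind_pmf (bernoulli_pmf (1/2))
       (\<lambda>b. if b then map_pmf state_inl (init A1) else map_pmf state_inr (init A2)),
     trans = (\<lambda>q a. if even q then map_pmf state_inl (trans A1 (q div 2) a)
       else map_pmf state_inr (trans A2 (q div 2) a)),
     wt = (\<lambda>q a q'. if even q then wt A1 (q div 2) a (q' div 2) else wt A2 (q div 2) a (q' div 2))\<rparr>"

lemma wf_pwa_union:
  assumes "wf_pwa A1" "wf_pwa A2"
  shows "wf_pwa (pwa_union A1 A2)"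
proof -
  have "set_pmf (init (pwa_union A1 A2)) \<subseteq> states (pwa_union A1 A2)"
    using assms by (auto simp: pwa_union_def wf_pwa_def set_bind_pmf split: if_splits; blast)
  moreover have "set_pmf (trans (pwa_union A1 A2) q a) \<subseteq> states (pwa_union A1 A2)"
    if "q \<in> states (pwa_union A1 A2)" for q a
    using that assms by (auto simp: pwa_union_def wf_pwa_def; blast)
  moreover have "finite (states (pwa_union A1 A2))"
    using assms by (simp add: pwa_union_def wf_pwa_def)
  ultimately show ?thesis
    unfolding wf_pwa_def by blast
qed

lemma pmf_init_pwa_union:
  "pmf (init (pwa_union A1 A2)) x =
    ((if even x then pmf (init A1) (x div 2) else 0) + (if odd x then pmf (init A2) (x div 2) else 0)) / 2"
  by (simp add: pwa_union_def pmf_bind pmf_map_state_inl pmf_map_state_inr)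

lemma pmf_trans_pwa_union:
  "pmf (trans (pwa_union A1 A2) q a) x =
    (if even q then (if even x then pmf (trans A1 (q div 2) a) (x div 2) else 0)
     else (if odd x then pmf (trans A2 (q div 2) a) (x div 2) else 0))"
  by (simp add: pwa_union_def pmf_map_state_inl pmf_map_state_inr)

lemma prefix_prob_pwa_union:
  assumes "xs \<noteq> []"
  shows "prefix_prob (pwa_union A1 A2) w xs =
    ((if \<forall>x\<in>set xs. even x then prefix_prob A1 w (map (\<lambda>x. x div 2) xs) else 0) +
     (if \<forall>x\<in>set xs. odd x then prefix_prob A2 w (map (\<lambda>x. x div 2) xs) else 0)) / 2"
  using assms
proof (induction xs rule: rev_induct)
  case (snoc y ys)
  show ?case
  proof (cases "ys = []")
    case True
    then show ?thesis
      by (simp add: prefix_prob_singleton pmf_init_pwa_union)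
  next
    case False
    note IH = snoc.IH[OF False]
    have last: "last ys \<in> set ys"
      using False by simp
    consider (inl) "\<forall>x\<in>set ys. even x" | (inr) "\<forall>x\<in>set ys. odd x"
      | (mixed) "\<not> (\<forall>x\<in>set ys. even x)" "\<not> (\<forall>x\<in>set ys. odd x)"
      by blast
    then show ?thesis
    proof cases
      case inl
      then have "\<not> (\<forall>x\<in>set ys. odd x)" "even (last ys)"
        using last by auto
      with inl IH False show ?thesis
        by (simp add: prefix_prob_snoc pmf_trans_pwa_union last_map)
    next
      case inr
      then have "\<not> (\<forall>x\<in>set ys. even x)" "odd (last ys)"
        using last by auto
      with inr IH False show ?thesis
        by (simp add: prefix_prob_snoc pmf_trans_pwa_union last_map)
    next
      case mixed
      with IH False show ?thesis
        by (auto simp: prefix_prob_snoc)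
    qed
  qed
qed simp

lemma weight_seq_pwa_union_inl: "weight_seq (pwa_union A1 A2) w (smap state_inl r) = weight_seq A1 w r"
  and weight_seq_pwa_union_inr: "weight_seq (pwa_union A1 A2) w (smap state_inr r) = weight_seq A2 w r"
  by (simp_all add: fun_eq_iff weight_seq_def pwa_union_def)

definition fair_mixture :: "'b measure \<Rightarrow> 'b measure \<Rightarrow> 'b measure" where
  "fair_mixture M N = measure_pmf (bernoulli_pmf (1/2)) \<bind> (\<lambda>b. if b then M else N)"

lemma
  assumes "prob_space M" "prob_space N" "sets M = sets L" "sets N = sets L"
  shows sets_fair_mixture: "sets (fair_mixture M N) = sets L"
    and prob_space_fair_mixture: "prob_space (fair_mixture M N)"
    and measure_fair_mixture: "X \<in> sets L \<Longrightarrow> measure (fair_mixture M N) X = (measure M X + measure N X) / 2"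
proof -
  interpret M: prob_space M by fact
  interpret N: prob_space N by fact
  have coin: "measure_pmf (bernoulli_pmf (1/2)) \<in> space (prob_algebra (count_space UNIV))"
    by (simp add: space_prob_algebra prob_space_measure_pmf)
  have kernel: "(\<lambda>b. if b then M else N) \<in> count_space UNIV \<rightarrow>\<^sub>M prob_algebra L"
    using assms by (simp add: space_prob_algebra)
  show "sets (fair_mixture M N) = sets L"
    unfolding fair_mixture_def by (rule sets_bind'[OF coin kernel])
  show "prob_space (fair_mixture M N)"
    unfolding fair_mixture_def by (rule prob_space_bind'[OF coin kernel])
  assume X: "X \<in> sets L"
  have "emeasure (fair_mixture M N) X = (\<integral>\<^sup>+b. emeasure (if b then M else N) X \<partial>bernoulli_pmf (1/2))"
    unfolding fair_mixture_def by (rule emeasure_bind_prob_algebra[OF coin kernel X])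
  also have "\<dots> = ennreal (measure M X) * ennreal (1/2) + ennreal (measure N X) * ennreal (1/2)"
    by (subst nn_integral_measure_pmf_finite) (auto simp: UNIV_bool M.emeasure_eq_measure N.emeasure_eq_measure)
  also have "\<dots> = ennreal (measure M X / 2) + ennreal (measure N X / 2)"
    by (subst (1 2) ennreal_mult[symmetric]) simp_all
  also have "\<dots> = ennreal ((measure M X + measure N X) / 2)"
    by (subst ennreal_plus[symmetric]) (simp_all add: add_divide_distrib)
  finally show "measure (fair_mixture M N) X = (measure M X + measure N X) / 2"
    by (simp add: measure_def)
qed

lemma run_measure_pwa_union:
  fixes A1 A2 :: "'a::finite pwa"
  assumes "wf_pwa A1" "wf_pwa A2"
  shows "run_measure (pwa_union A1 A2) w = fair_mixture
    (distr (run_measure A1 w) (stream_space (count_space UNIV)) (smap state_inl))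
    (distr (run_measure A2 w) (stream_space (count_space UNIV)) (smap state_inr))"
    (is "_ = fair_mixture ?M1 ?M2")
proof -
  have "prob_space ?M1" "prob_space ?M2"
    using assms by (auto intro!: prob_space.prob_space_distr prob_space_run_measure measurable_smap_run_measure)
  moreover have "sets ?M1 = sets (stream_space (count_space UNIV))" "sets ?M2 = sets (stream_space (count_space UNIV))"
    by simp_all
  ultimately have sets: "sets (fair_mixture ?M1 ?M2) = sets (stream_space (count_space UNIV))"
    and prob: "prob_space (fair_mixture ?M1 ?M2)"
    and mix: "\<And>X. X \<in> sets (stream_space (count_space UNIV)) \<Longrightarrow>
      measure (fair_mixture ?M1 ?M2) X = (measure ?M1 X + measure ?M2 X) / 2"
    by (simp_all add: sets_fair_mixture prob_space_fair_mixture measure_fair_mixture)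
  show ?thesis
  proof (rule run_measure_eqI[OF sets prob])
    fix xs :: "nat list"
    assume "xs \<noteq> []"
    interpret mixture: prob_space "fair_mixture ?M1 ?M2"
      by (rule prob)
    have "measure ?M1 (sstart UNIV xs) =
        (if \<forall>x\<in>set xs. even x then prefix_prob A1 w (map (\<lambda>x. x div 2) xs) else 0)"
      using assms \<open>xs \<noteq> []\<close>
      by (simp add: measure_distr measurable_smap_run_measure space_run_measure measure_run_measure_sstart
          vimage_smap_sstart_left_inverse[of "\<lambda>x. x div 2"] range_state_inl subset_iff)
    moreover have "measure ?M2 (sstart UNIV xs) =
        (if \<forall>x\<in>set xs. odd x then prefix_prob A2 w (map (\<lambda>x. x div 2) xs) else 0)"
      using assms \<open>xs \<noteq> []\<close>
      by (simp add: measure_distr measurable_smap_run_measure space_run_measure measure_run_measure_sstart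
          vimage_smap_sstart_left_inverse[of "\<lambda>x. x div 2"] range_state_inr subset_iff)
    ultimately have "measure (fair_mixture ?M1 ?M2) (sstart UNIV xs) = prefix_prob (pwa_union A1 A2) w xs"
      using \<open>xs \<noteq> []\<close> by (simp add: mix prefix_prob_pwa_union)
    then show "emeasure (fair_mixture ?M1 ?M2) (sstart UNIV xs) = prefix_prob (pwa_union A1 A2) w xs"
      by (simp add: mixture.emeasure_eq_measure)
  qed
qed

lemma measurable_weight_seq [measurable]:
  "(\<lambda>r. weight_seq A w r i) \<in> borel_measurable (stream_space (count_space UNIV))"
proof -
  have "(\<lambda>r. real_of_rat (wt A q (w i) (r !! Suc i))) \<in> borel_measurable (stream_space (count_space UNIV))"
    for q
    using measurable_compose[OF measurable_snth[of "Suc i" "count_space UNIV"],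
        of "\<lambda>x. real_of_rat (wt A q (w i) x)" borel]
    by simp
  from measurable_compose_countable'[OF this measurable_snth]
  show ?thesis by (simp add: weight_seq_def)
qed

lemma sets_Val_ge:
  "{r. ereal \<eta> \<le> Val V (weight_seq A w r)} \<in> sets (stream_space (count_space UNIV))"
proof -
  have "(\<lambda>r. Val V (weight_seq A w r)) \<in> borel_measurable (stream_space (count_space UNIV))"
    by (cases V) (simp_all, measurable)
  then have "{r \<in> space (stream_space (count_space UNIV)). ereal \<eta> \<le> Val V (weight_seq A w r)}
      \<in> sets (stream_space (count_space UNIV))"
    by measurable
  then show ?thesis
    by (simp add: space_stream_space)
qed

definition threshold_prob :: "'a pwa \<Rightarrow> valfun \<Rightarrow> (nat \<Rightarrow> 'a) \<Rightarrow> real \<Rightarrow> real" where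
  "threshold_prob A V w \<eta> = measure (run_measure A w) {r. ereal \<eta> \<le> Val V (weight_seq A w r)}"

lemma lang_Pos_threshold_prob: "lang Pos V A w = Sup {ereal \<eta> |\<eta>. 0 < threshold_prob A V w \<eta>}"
  and lang_As_threshold_prob: "lang As V A w = Sup {ereal \<eta> |\<eta>. threshold_prob A V w \<eta> = 1}"
  by (simp_all add: threshold_prob_def)

lemma
  fixes A :: "'a::finite pwa"
  assumes "wf_pwa A"
  shows threshold_prob_nonneg: "0 \<le> threshold_prob A V w \<eta>"
    and threshold_prob_le_1: "threshold_prob A V w \<eta> \<le> 1"
    and threshold_prob_antimono: "\<eta>' \<le> \<eta> \<Longrightarrow> threshold_prob A V w \<eta> \<le> threshold_prob A V w \<eta>'"
proof -
  interpret prob_space "run_measure A w"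
    using assms by (rule prob_space_run_measure)
  show "0 \<le> threshold_prob A V w \<eta>" "threshold_prob A V w \<eta> \<le> 1"
    by (simp_all add: threshold_prob_def)
  assume "\<eta>' \<le> \<eta>"
  then show "threshold_prob A V w \<eta> \<le> threshold_prob A V w \<eta>'"
    unfolding threshold_prob_def
    using assms by (intro finite_measure_mono)
      (auto simp: sets_run_measure sets_Val_ge intro: order_trans[of "ereal \<eta>'" "ereal \<eta>"])
qed

lemma threshold_prob_eq_1_antimono:
  fixes A :: "'a::finite pwa"
  assumes "wf_pwa A" "threshold_prob A V w \<eta> = 1" "\<eta>' \<le> \<eta>"
  shows "threshold_prob A V w \<eta>' = 1"
  using assms threshold_prob_antimono[OF assms(1) assms(3), of V w] threshold_prob_le_1[OF assms(1), of V w \<eta>']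
  by simp

lemma threshold_prob_pwa_union:
  fixes A1 A2 :: "'a::finite pwa"
  assumes "wf_pwa A1" "wf_pwa A2"
  shows "threshold_prob (pwa_union A1 A2) V w \<eta> = (threshold_prob A1 V w \<eta> + threshold_prob A2 V w \<eta>) / 2"
  using assms
  by (simp add: threshold_prob_def run_measure_pwa_union measure_fair_mixture prob_space_run_measure
      measurable_smap_run_measure prob_space.prob_space_distr sets_Val_ge measure_distr space_run_measure
      vimage_def weight_seq_pwa_union_inl weight_seq_pwa_union_inr)

lemma Sup_ereal_Collect_disj:
  "Sup {ereal x |x. P x \<or> Q x} = max (Sup {ereal x |x. P x}) (Sup {ereal x |x. Q x})"
proof -
  have "{ereal x |x. P x \<or> Q x} = {ereal x |x. P x} \<union> {ereal x |x. Q x}"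
    by blast
  then show ?thesis
    by (simp add: Sup_union_distrib sup_max)
qed

lemma Sup_ereal_Collect_conj:
  assumes P_down: "\<And>x y. P x \<Longrightarrow> y \<le> x \<Longrightarrow> P y" and Q_down: "\<And>x y. Q x \<Longrightarrow> y \<le> x \<Longrightarrow> Q y"
  shows "Sup {ereal x |x. P x \<and> Q x} = min (Sup {ereal x |x. P x}) (Sup {ereal x |x. Q x})"
proof (rule antisym)
  show "Sup {ereal x |x. P x \<and> Q x} \<le> min (Sup {ereal x |x. P x}) (Sup {ereal x |x. Q x})"
    by (intro min.boundedI Sup_subset_mono) blast+
  show "min (Sup {ereal x |x. P x}) (Sup {ereal x |x. Q x}) \<le> Sup {ereal x |x. P x \<and> Q x}"
  proof (rule dense_le)
    fix y
    assume y: "y < min (Sup {ereal x |x. P x}) (Sup {ereal x |x. Q x})"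
    show "y \<le> Sup {ereal x |x. P x \<and> Q x}"
    proof (cases y)
      case (real r)
      from y obtain x1 x2 where "P x1" "r < x1" "Q x2" "r < x2"
        unfolding real by (auto simp: less_Sup_iff)
      then have "P r \<and> Q r"
        using P_down Q_down by (meson less_imp_le)
      then show ?thesis
        unfolding real by (blast intro: Sup_upper)
    qed (use y in auto)
  qed
qed

lemma lang_Pos_pwa_union:
  fixes A1 A2 :: "'a::finite pwa"
  assumes "wf_pwa A1" "wf_pwa A2"
  shows "lang Pos V (pwa_union A1 A2) w = max (lang Pos V A1 w) (lang Pos V A2 w)"
proof -
  have "0 < threshold_prob (pwa_union A1 A2) V w \<eta> \<longleftrightarrow>
      0 < threshold_prob A1 V w \<eta> \<or> 0 < threshold_prob A2 V w \<eta>" for \<eta>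
    using assms threshold_prob_nonneg[OF assms(1), of V w \<eta>] threshold_prob_nonneg[OF assms(2), of V w \<eta>]
    by (auto simp: threshold_prob_pwa_union)
  then show ?thesis
    unfolding lang_Pos_threshold_prob by (simp add: Sup_ereal_Collect_disj)
qed

lemma lang_As_pwa_union:
  fixes A1 A2 :: "'a::finite pwa"
  assumes "wf_pwa A1" "wf_pwa A2"
  shows "lang As V (pwa_union A1 A2) w = min (lang As V A1 w) (lang As V A2 w)"
proof -
  have "threshold_prob (pwa_union A1 A2) V w \<eta> = 1 \<longleftrightarrow>
      threshold_prob A1 V w \<eta> = 1 \<and> threshold_prob A2 V w \<eta> = 1" for \<eta>
    using assms threshold_prob_le_1[OF assms(1), of V w \<eta>] threshold_prob_le_1[OF assms(2), of V w \<eta>]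
    by (auto simp: threshold_prob_pwa_union)
  then have "lang As V (pwa_union A1 A2) w =
      Sup {ereal \<eta> |\<eta>. threshold_prob A1 V w \<eta> = 1 \<and> threshold_prob A2 V w \<eta> = 1}"
    unfolding lang_As_threshold_prob by simp
  also have "\<dots> = min (lang As V A1 w) (lang As V A2 w)"
    unfolding lang_As_threshold_prob
    by (rule Sup_ereal_Collect_conj) (use threshold_prob_eq_1_antimono assms in blast)+
  finally show ?thesis .
qed

lemma closed_max_Pos: "closed_max Pos V TYPE('a::finite)"
  unfolding closed_max_def using wf_pwa_union lang_Pos_pwa_union by blast

lemma closed_min_As: "closed_min As V TYPE('a::finite)"
  unfolding closed_min_def using wf_pwa_union lang_As_pwa_union by blast

theorem lemma16:
  shows "closed_max Pos LimSup TYPE('a::finite) \<and> closed_max Pos LimInf TYPE('a) \<and>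
         closed_max Pos LimAvg TYPE('a) \<and>
         closed_min As LimSup TYPE('a) \<and> closed_min As LimInf TYPE('a) \<and>
         closed_min As LimAvg TYPE('a)"
  by (simp add: closed_max_Pos closed_min_As)

end
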